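(* There do not exist primes $p, q$ and positive integers $x, y, z$ such that \[ x^3 - 1 = p^3 y^2 \quad \text{and} \quad x^3 + 1 = q^3 z^2 . \] Equivalently, there are no three consecutive powerful numbers of the form $x^3 - 1 = p^3 y^2$, $x^3$, $x^3 + 1 = q^3 z^2$ with $p, q$ prime and $x, y, z$ positive integers.
   Context: A positive integer $n$ is called powerful if $p^2 \mid n$ for every prime $p$ dividing $n$. *)

theory Defs
  imports "HOL-Computational_Algebra.Primes"
begin

end

theory Submission
  imports Defs "HOL-Computational_Algebra.Nth_Powers"
begin

text \<open>
  Write \<open>x\<^sup>3 - 1 = (x - 1)(x\<^sup>2 + x + 1)\<close> and \<open>x\<^sup>3 + 1 = (x + 1)(x\<^sup>2 - x + 1)\<close>: in each
  product the gcd of the two factors divides 3, and the quadratic factor lies strictly between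
  two consecutive squares. If a product of two coprime positive factors is a prime power times
  a square, the prime divides only one of them, so the other one is a square; hence whichever
  linear factor is prime to 3 is a square. For \<open>x \<equiv> 0 (mod 3)\<close> both \<open>x - 1\<close> and \<open>x + 1\<close>
  are squares, which differ by 2; for \<open>x \<equiv> 1\<close> the square \<open>x + 1\<close> is \<open>2 (mod 3)\<close>.
  For \<open>x \<equiv> 2\<close> we get \<open>x - 1 = (3k + 1)\<^sup>2\<close> with \<open>k \<noteq> 0\<close>, and then
  \<open>x\<^sup>3 + 1 = 9(3k\<^sup>2 + 2k + 1) \<cdot> (3k\<^sup>2 + 3k + 1) \<cdot> (9k\<^sup>2 + 3k + 1)\<close> with pairwise coprime
  factors, the last one not a square. So \<open>3k\<^sup>2 + 2k + 1\<close> and \<open>3k\<^sup>2 + 3k + 1\<close> are both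
  squares, but two squares of size about \<open>3k\<^sup>2\<close> cannot differ by only \<open>|k|\<close>.
\<close>

lemma is_nth_power_mult_coprime_intD:
  fixes a b :: int
  assumes "coprime a b" "is_nth_power n (a * b)" "a > 0" "b > 0"
  shows "is_nth_power n a" "is_nth_power n b"
proof -
  obtain w where w: "a * b = w ^ n" using assms(2) by (auto elim: is_nth_powerE)
  have "nat a * nat b = nat \<bar>w\<bar> ^ n"
    using w assms(3,4) by (metis abs_of_pos nat_mult_distrib nat_power_eq power_abs abs_ge_zero zero_less_mult_iff)
  moreover have "coprime (nat a) (nat b)"
    using assms(1,3,4) by (simp add: coprime_int_iff[symmetric])
  ultimately have "is_nth_power n (nat a)" "is_nth_power n (nat b)"
    using is_nth_power_mult_coprime_natD assms(3,4) by (auto intro: is_nth_powerI)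
  moreover have "is_nth_power n k" if "is_nth_power n (nat k)" "k \<ge> 0" for k :: int
    using that by (metis is_nth_powerE is_nth_powerI nat_0_le of_nat_power)
  ultimately show "is_nth_power n a" "is_nth_power n b"
    using assms(3,4) by simp_all
qed

lemma is_square_coprime_factor_prime_power:
  fixes a b y p :: int
  assumes "prime p" "a > 0" "b > 0" "coprime a b" "\<not> p dvd a" "a * b = p ^ n * y\<^sup>2"
  shows "is_square a"
proof -
  have "coprime a (p ^ n)"
    using assms(1,5) by (metis prime_imp_coprime coprime_commute coprime_power_right_iff)
  with assms(4) have "coprime a (b * p ^ n)" by simp
  moreover have "is_square (a * (b * p ^ n))"
    using assms(6) by (intro is_nth_powerI[of _ "p ^ n * y"]) (simp add: power2_eq_square algebra_simps)
  moreover have "b * p ^ n > 0" using assms(1,3) prime_gt_0_int by simp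
  ultimately show ?thesis
    using is_nth_power_mult_coprime_intD(1) assms(2) by blast
qed

lemma is_square_coprime_factor_nonsquare_cofactor:
  fixes a b y p :: int
  assumes "prime p" "a > 0" "b > 0" "coprime a b" "a * b = p ^ n * y\<^sup>2"
    and "\<not> is_square b"
  shows "is_square a"
proof -
  have "p dvd b"
    using is_square_coprime_factor_prime_power[of p b a n y] assms by (auto simp: coprime_commute mult.commute)
  then have "\<not> p dvd a"
    using assms(1,4) by (meson coprime_common_divisor not_prime_unit)
  then show ?thesis
    using is_square_coprime_factor_prime_power assms(1-5) by blast
qed

lemma not_square_between_consecutive_squares:
  fixes n N :: int
  assumes "0 \<le> n" "n\<^sup>2 < N" "N < (n + 1)\<^sup>2"
  shows "\<not> is_square N"
proof
  assume "is_square N"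
  then obtain w where "N = \<bar>w\<bar>\<^sup>2" by (auto elim: is_nth_powerE)
  moreover have "\<bar>w\<bar> \<le> n \<or> n + 1 \<le> \<bar>w\<bar>" by linarith
  then have "\<bar>w\<bar>\<^sup>2 \<le> n\<^sup>2 \<or> (n + 1)\<^sup>2 \<le> \<bar>w\<bar>\<^sup>2"
    using assms(1) by (metis abs_ge_zero power_mono add_nonneg_nonneg zero_le_one)
  ultimately show False using assms(2,3) by linarith
qed

lemma square_gap:
  fixes a w :: int
  assumes "w\<^sup>2 < a\<^sup>2"
  shows "2 * \<bar>w\<bar> + 1 \<le> a\<^sup>2 - w\<^sup>2"
proof -
  have "\<bar>w\<bar> < \<bar>a\<bar>"
    using assms by (metis abs_ge_zero power2_abs power_less_imp_less_base)
  then have "(\<bar>w\<bar> + 1)\<^sup>2 \<le> \<bar>a\<bar>\<^sup>2"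
    by (intro power_mono) auto
  then show ?thesis by (simp add: power2_eq_square algebra_simps)
qed

lemma square_not_multiple_of_3:
  fixes u :: int
  assumes "\<not> 3 dvd u"
  obtains k where "u\<^sup>2 = (3 * k + 1)\<^sup>2"
proof -
  have "u mod 3 = 1 \<or> u mod 3 = 2" using assms by presburger
  then show ?thesis
  proof
    assume "u mod 3 = 1"
    then have "u = 3 * (u div 3) + 1" by presburger
    then show ?thesis using that by metis
  next
    assume "u mod 3 = 2"
    then have "u = - (3 * (- (u div 3) - 1) + 1)" by presburger
    then show ?thesis using that by (metis power2_minus)
  qed
qed

lemma coprime_mult_add_iff:
  fixes a b c :: "'a :: semiring_gcd"
  shows "coprime a (b * a + c) \<longleftrightarrow> coprime a c"
  by (simp add: coprime_iff_gcd_eq_1 gcd_add_mult)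

lemma is_square_cube_minus_one:
  fixes x y p :: int
  assumes "prime p" "x > 1" "\<not> 3 dvd (x - 1)" "x ^ 3 - 1 = p ^ n * y\<^sup>2"
  shows "is_square (x - 1)"
proof (rule is_square_coprime_factor_nonsquare_cofactor)
  have "coprime (x - 1) 3"
    using assms(3) prime_imp_coprime[of 3 "x - 1"] by (simp add: coprime_commute)
  then show "coprime (x - 1) (x\<^sup>2 + x + 1)"
    using coprime_mult_add_iff[of "x - 1" "x + 2" 3] by (simp add: power2_eq_square algebra_simps)
  show "(x - 1) * (x\<^sup>2 + x + 1) = p ^ n * y\<^sup>2"
    using assms(4) by (simp add: power2_eq_square power3_eq_cube algebra_simps)
  show "\<not> is_square (x\<^sup>2 + x + 1)"
    by (rule not_square_between_consecutive_squares[of x])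
      (use assms(2) in \<open>simp_all add: power2_eq_square algebra_simps\<close>)
qed (use assms in \<open>auto simp: add_pos_pos\<close>)

lemma is_square_cube_plus_one:
  fixes x z q :: int
  assumes "prime q" "x > 1" "\<not> 3 dvd (x + 1)" "x ^ 3 + 1 = q ^ n * z\<^sup>2"
  shows "is_square (x + 1)"
proof (rule is_square_coprime_factor_nonsquare_cofactor)
  have "coprime (x + 1) 3"
    using assms(3) prime_imp_coprime[of 3 "x + 1"] by (simp add: coprime_commute)
  then show "coprime (x + 1) (x\<^sup>2 - x + 1)"
    using coprime_mult_add_iff[of "x + 1" "x - 2" 3] by (simp add: power2_eq_square algebra_simps)
  show "(x + 1) * (x\<^sup>2 - x + 1) = q ^ n * z\<^sup>2"
    using assms(4) by (simp add: power2_eq_square power3_eq_cube algebra_simps)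
  show "\<not> is_square (x\<^sup>2 - x + 1)"
    by (rule not_square_between_consecutive_squares[of "x - 1"])
      (use assms(2) in \<open>simp_all add: power2_eq_square algebra_simps\<close>)
  show "x\<^sup>2 - x + 1 > 0"
    using assms(2) by (simp add: power2_eq_square)
qed (use assms in auto)

lemma quadratics_not_both_squares:
  fixes k :: int
  assumes "k \<noteq> 0" "is_square (3 * k\<^sup>2 + 3 * k + 1)"
  shows "\<not> is_square (3 * k\<^sup>2 + 2 * k + 1)"
proof
  assume "is_square (3 * k\<^sup>2 + 2 * k + 1)"
  then obtain w where w: "w\<^sup>2 = 3 * k\<^sup>2 + 2 * k + 1" by (auto elim: is_nth_powerE)
  obtain a where a: "a\<^sup>2 = 3 * k\<^sup>2 + 3 * k + 1" using assms(2) by (auto elim: is_nth_powerE)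
  have "k\<^sup>2 > 0" using assms(1) by simp
  consider "k > 0" | "k < 0" using assms(1) by linarith
  then show False
  proof cases
    case 1
    then have "2 * \<bar>w\<bar> + 1 \<le> k" using square_gap[of w a] a w by simp
    then have "(2 * \<bar>w\<bar> + 1)\<^sup>2 \<le> k\<^sup>2" by (intro power_mono) auto
    then have "4 * w\<^sup>2 \<le> k\<^sup>2" by (simp add: power2_eq_square algebra_simps)
    then show False using w 1 \<open>k\<^sup>2 > 0\<close> by linarith
  next
    case 2
    then have "2 * \<bar>a\<bar> + 1 \<le> - k" using square_gap[of a w] a w by simp
    then have "(2 * \<bar>a\<bar> + 1)\<^sup>2 \<le> (- k)\<^sup>2" by (intro power_mono) auto
    then have "4 * a\<^sup>2 \<le> k\<^sup>2" by (simp add: power2_eq_square algebra_simps)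
    moreover have "0 \<le> (3 * k + 2)\<^sup>2" by simp
    then have "0 \<le> 9 * k\<^sup>2 + 12 * k + 4" by (simp add: power2_eq_square algebra_simps)
    ultimately show False using a \<open>k\<^sup>2 > 0\<close> by linarith
  qed
qed

lemma coprime_quadratic_factors:
  fixes k :: int
  shows "coprime (3 * k\<^sup>2 + 3 * k + 1) (9 * k\<^sup>2 + 3 * k + 1)"
proof -
  define S where "S = 3 * k\<^sup>2 + 3 * k + 1"
  have "odd S" unfolding S_def by (simp add: power2_eq_square)
  moreover have "coprime (3 * k + 1) (3 * S)"
    using coprime_mult_add_iff[of "3 * k + 1" "3 * k + 2" 1] unfolding S_def
    by (simp add: power2_eq_square algebra_simps)
  ultimately have "coprime S (2 * (3 * k + 1))"
    by (simp only: coprime_mult_right_iff coprime_right_2_iff_odd) (simp add: coprime_commute)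
  moreover have "9 * k\<^sup>2 + 3 * k + 1 = 3 * S + - (2 * (3 * k + 1))"
    unfolding S_def by (simp add: algebra_simps)
  ultimately show ?thesis
    unfolding S_def by (simp only: coprime_mult_add_iff coprime_minus_right_iff)
qed

lemma not_square_quadratic_factor:
  fixes k :: int
  assumes "k \<noteq> 0"
  shows "\<not> is_square (9 * k\<^sup>2 + 3 * k + 1)"
proof (cases "k > 0")
  case True
  show ?thesis
    by (rule not_square_between_consecutive_squares[of "3 * k"])
      (use True in \<open>simp_all add: power2_eq_square algebra_simps\<close>)
next
  case False
  with assms have "k < 0" by simp
  show ?thesis
    by (rule not_square_between_consecutive_squares[of "- 3 * k - 1"])
      (use \<open>k < 0\<close> in \<open>simp_all add: power2_eq_square algebra_simps\<close>)
qed

lemma cube_plus_one_not_prime_power_times_square: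
  fixes k x z q :: int
  assumes "prime q" "k \<noteq> 0" "x = (3 * k + 1)\<^sup>2 + 1" "x ^ 3 + 1 = q ^ n * z\<^sup>2"
  shows False
proof -
  define m where "m = 3 * k\<^sup>2 + 2 * k"
  define S where "S = 3 * k\<^sup>2 + 3 * k + 1"
  define T where "T = 9 * k\<^sup>2 + 3 * k + 1"
  have factored: "(9 * (m + 1) * S) * T = q ^ n * z\<^sup>2"
    using assms(3,4) unfolding S_def T_def m_def
    by (simp add: power2_eq_square power3_eq_cube algebra_simps)
  have ST: "S * T = m * (3 * (m + 1)) + 1"
    unfolding S_def T_def m_def by (simp add: power2_eq_square algebra_simps)
  then have "coprime 3 (S * T)" "coprime (m + 1) (S * T)"
    using coprime_mult_add_iff[of 3 "m * (m + 1)" 1] coprime_mult_add_iff[of "m + 1" "3 * m" 1]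
    by (simp_all add: algebra_simps)
  then have "coprime (3 * 3 * (m + 1)) (S * T)"
    by (simp only: coprime_mult_left_iff)
  then have coprime_9: "coprime (9 * (m + 1)) (S * T)" by simp
  have "0 \<le> k * (k + 1)" "0 \<le> k * (3 * k + 2)"
    by (cases "k \<ge> 0"; simp add: mult_nonpos_nonpos)+
  moreover have "0 \<le> k\<^sup>2" by simp
  ultimately have pos: "S > 0" "T > 0" "m + 1 > 0"
    unfolding S_def T_def m_def by (simp_all only: distrib_left power2_eq_square; linarith)+
  have "is_square (9 * (m + 1) * S)"
  proof (rule is_square_coprime_factor_nonsquare_cofactor)
    show "coprime (9 * (m + 1) * S) T"
      using coprime_9 coprime_quadratic_factors[of k] by (simp add: S_def T_def)
    show "\<not> is_square T"
      using not_square_quadratic_factor[OF assms(2)] by (simp add: T_def)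
    show "9 * (m + 1) * S > 0" using pos by simp
  qed (fact assms(1) pos(2) factored)+
  moreover have "coprime (9 * (m + 1)) S"
    using coprime_9 by simp
  ultimately have "is_square (9 * (m + 1))" "is_square S"
    using is_nth_power_mult_coprime_intD pos by simp_all
  moreover have "is_square (9 :: int)"
    by (rule is_nth_powerI[of _ 3]) simp
  ultimately have "is_square (m + 1)"
    using is_nth_power_mult_cancel_left[of 2 9 "m + 1"] by simp
  moreover have "m + 1 = 3 * k\<^sup>2 + 2 * k + 1" by (simp add: m_def)
  ultimately show False
    using quadratics_not_both_squares[OF assms(2)] \<open>is_square S\<close> S_def by simp
qed

text \<open>For \<open>x = 2\<close> both \<open>x\<^sup>3 - 1 = 7\<close> and \<open>x\<^sup>3 + 1 = 3\<^sup>2\<close> are prime powers, hence \<open>x \<ge> 3\<close>.\<close>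

lemma cube_not_between_prime_powers_times_squares:
  fixes x y z p q :: int
  assumes "prime p" "prime q" "x \<ge> 3"
    and minus: "x ^ 3 - 1 = p ^ n * y\<^sup>2" and plus: "x ^ 3 + 1 = q ^ n' * z\<^sup>2"
  shows False
proof -
  have "x mod 3 = 0 \<or> x mod 3 = 1 \<or> x mod 3 = 2" by auto
  then show False
  proof (elim disjE)
    assume "x mod 3 = 0"
    then have "\<not> 3 dvd (x - 1)" "\<not> 3 dvd (x + 1)" by presburger+
    then obtain u v where u: "x - 1 = u\<^sup>2" and v: "x + 1 = v\<^sup>2"
      using is_square_cube_minus_one[OF assms(1) _ _ minus] is_square_cube_plus_one[OF assms(2) _ _ plus]
        assms(3) by (fastforce elim!: is_nth_powerE)
    then have "2 * \<bar>u\<bar> + 1 \<le> 2" using square_gap[of u v] by simp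
    then have "u = 0" by simp
    then show False using u assms(3) by simp
  next
    assume "x mod 3 = 1"
    then have "\<not> 3 dvd (x + 1)" by presburger
    then obtain v where v: "x + 1 = v\<^sup>2"
      using is_square_cube_plus_one[OF assms(2) _ _ plus] assms(3) by (fastforce elim!: is_nth_powerE)
    have "\<not> 3 dvd v"
      using \<open>\<not> 3 dvd (x + 1)\<close> v by (auto simp: power2_eq_square)
    then obtain k where "v\<^sup>2 = (3 * k + 1)\<^sup>2" by (rule square_not_multiple_of_3)
    then have "x + 1 = 3 * (3 * k\<^sup>2 + 2 * k) + 1" using v by (simp add: power2_eq_square algebra_simps)
    then show False using \<open>x mod 3 = 1\<close> by presburger
  next
    assume "x mod 3 = 2"
    then have "\<not> 3 dvd (x - 1)" by presburger
    then obtain u where u: "x - 1 = u\<^sup>2"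
      using is_square_cube_minus_one[OF assms(1) _ _ minus] assms(3) by (fastforce elim!: is_nth_powerE)
    have "\<not> 3 dvd u"
      using \<open>\<not> 3 dvd (x - 1)\<close> u by (auto simp: power2_eq_square)
    then obtain k where k: "u\<^sup>2 = (3 * k + 1)\<^sup>2" by (rule square_not_multiple_of_3)
    have "k \<noteq> 0" using u k assms(3) by auto
    moreover have "x = (3 * k + 1)\<^sup>2 + 1" using u k by simp
    ultimately show False
      using cube_plus_one_not_prime_power_times_square[OF assms(2)] plus by blast
  qed
qed

theorem theorem1:
  shows "\<not> (\<exists>(p::nat) (q::nat) (x::int) (y::int) (z::int).
            prime p \<and> prime q \<and> x > 0 \<and> y > 0 \<and> z > 0 \<and>
            x ^ 3 - 1 = int p ^ 3 * y ^ 2 \<and> x ^ 3 + 1 = int q ^ 3 * z ^ 2)"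
proof
  assume "\<exists>(p::nat) (q::nat) (x::int) (y::int) (z::int).
            prime p \<and> prime q \<and> x > 0 \<and> y > 0 \<and> z > 0 \<and>
            x ^ 3 - 1 = int p ^ 3 * y ^ 2 \<and> x ^ 3 + 1 = int q ^ 3 * z ^ 2"
  then obtain p q :: nat and x y z :: int where
    primes: "prime (int p)" "prime (int q)" and "x > 0" "y > 0"
    and minus: "x ^ 3 - 1 = int p ^ 3 * y\<^sup>2" and plus: "x ^ 3 + 1 = int q ^ 3 * z\<^sup>2"
    by auto
  have "(2 :: int) ^ 3 \<le> int p ^ 3"
    using prime_ge_2_int[OF primes(1)] by (intro power_mono) auto
  moreover have "1 \<le> y\<^sup>2" using \<open>y > 0\<close> by simp
  ultimately have "2 ^ 3 * 1 \<le> x ^ 3 - 1"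
    unfolding minus by (intro mult_mono) auto
  then have "\<not> x ^ 3 \<le> 2 ^ 3" by simp
  then have "x \<ge> 3"
    using power_mono[of x 2 3] \<open>x > 0\<close> by fastforce
  then show False
    using cube_not_between_prime_powers_times_squares[OF primes] minus plus by blast
qed

end
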